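(* For all $\theta_1,\theta_2\in\mathbb{R}$, the mixed-power-affine bilinear form $g^{A,\theta_1,\theta_2}$ on $\mathrm{SPD}_n$ is symmetric and positive definite at every point, hence a Riemannian metric on $\mathrm{SPD}_n$; moreover $g^{A,\theta_1,\theta_2}=g^{A,\theta_2,\theta_1}$.
   Context: For $\theta\in\mathbb{R}$ define $\varphi_\theta:\mathrm{SPD}_n\to\mathrm{Sym}_n$ by $\varphi_\theta=\frac1\theta\mathrm{pow}_\theta$ if $\theta\neq0$ and $\varphi_0=\log$, where $\mathrm{pow}_\theta=\exp\circ(\theta\log)$ is the matrix power and $\log$ the symmetric matrix logarithm; $\partial_X\varphi_\theta(\Sigma)$ is the differential at $\Sigma$ applied to $X\in\mathrm{Sym}_n\cong T_\Sigma\mathrm{SPD}_n$. With $\theta=(\theta_1+\theta_2)/2$, the mixed-power-affine bilinear form is $g^{A,\theta_1,\theta_2}_\Sigma(X,Y)=\mathrm{tr}\big(\Sigma^{-\theta}\,\partial_X\varphi_{\theta_1}(\Sigma)\,\Sigma^{-\theta}\,\partial_Y\varphi_{\theta_2}(\Sigma)\big)$. *)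

theory Defs
  imports "HOL-Analysis.Analysis"
begin

text \<open>Symmetric matrices (Sym_n, identified with the tangent spaces of SPD_n).\<close>
definition sym_mat :: "real^'n^'n \<Rightarrow> bool" where
  "sym_mat A \<longleftrightarrow> transpose A = A"

definition spd :: "real^'n^'n \<Rightarrow> bool" where
  "spd A \<longleftrightarrow> sym_mat A \<and> (\<forall>x::real^'n. x \<noteq> 0 \<longrightarrow> x \<bullet> (A *v x) > 0)"

definition diag_mat :: "real^'n \<Rightarrow> real^'n^'n" where
  "diag_mat d = (\<chi> i j. if i = j then d $ i else 0)"

definition mat_fun :: "(real \<Rightarrow> real) \<Rightarrow> real^'n^'n \<Rightarrow> real^'n^'n" where
  "mat_fun f A = (THE M. \<exists>U d. orthogonal_matrix U \<and> A = U ** diag_mat d ** transpose U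
       \<and> M = U ** diag_mat (\<chi> i. f (d $ i)) ** transpose U)"

definition mat_log :: "real^'n^'n \<Rightarrow> real^'n^'n" where
  "mat_log A = mat_fun ln A"

definition mat_exp :: "real^'n^'n \<Rightarrow> real^'n^'n" where
  "mat_exp A = mat_fun exp A"

definition mat_pow :: "real \<Rightarrow> real^'n^'n \<Rightarrow> real^'n^'n" where
  "mat_pow \<theta> A = mat_exp (\<theta> *\<^sub>R mat_log A)"

definition phi :: "real \<Rightarrow> real^'n^'n \<Rightarrow> real^'n^'n" where
  "phi \<theta> A = (if \<theta> = 0 then mat_log A else (1 / \<theta>) *\<^sub>R mat_pow \<theta> A)"

definition dphi :: "real \<Rightarrow> real^'n^'n \<Rightarrow> real^'n^'n \<Rightarrow> real^'n^'n" where
  "dphi \<theta> S X = vector_derivative (\<lambda>t. phi \<theta> (S + t *\<^sub>R X)) (at 0)"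

definition mpa_form :: "real \<Rightarrow> real \<Rightarrow> real^'n^'n \<Rightarrow> real^'n^'n \<Rightarrow> real^'n^'n \<Rightarrow> real" where
  "mpa_form \<theta>1 \<theta>2 S X Y =
     (let \<theta> = (\<theta>1 + \<theta>2) / 2 in
      trace (mat_pow (- \<theta>) S ** dphi \<theta>1 S X ** mat_pow (- \<theta>) S ** dphi \<theta>2 S Y))"

end

theory Submission
  imports Defs
begin

text \<open>Write \<open>\<Sigma> = U diag(\<lambda>) U\<^sup>T\<close> with \<open>U\<close> orthogonal and put \<open>X' = U\<^sup>T X U\<close>. By the
  Daleckii--Krein formula, \<open>U\<^sup>T (\<partial>\<^sub>X\<phi>\<^sub>\<theta>(\<Sigma>)) U\<close> is the entrywise product of \<open>X'\<close> with the matrix of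
  divided differences of \<open>\<phi>\<^sub>\<theta>\<close> at the eigenvalues, while \<open>\<Sigma>\<^sup>-\<^sup>\<theta>\<close> is diagonal in the same basis.
  Hence \<open>g(X, Y) = \<Sum> c\<^sub>i\<^sub>j X'\<^sub>i\<^sub>j Y'\<^sub>i\<^sub>j\<close>, where \<open>c\<^sub>i\<^sub>j\<close> is \<open>(\<lambda>\<^sub>i \<lambda>\<^sub>j)\<^sup>-\<^sup>\<theta>\<close> times the divided
  differences of \<open>\<phi>\<^sub>\<theta>\<^sub>1\<close> and of \<open>\<phi>\<^sub>\<theta>\<^sub>2\<close> at \<open>(\<lambda>\<^sub>i, \<lambda>\<^sub>j)\<close>. Every \<open>\<phi>\<^sub>\<theta>\<close> is strictly increasing,
  so the weights are positive, and they are symmetric in \<open>\<theta>\<^sub>1, \<theta>\<^sub>2\<close>; all four claims follow.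

  The Daleckii--Krein formula is proved entrywise. The eigenvalues of \<open>\<Sigma> + tX\<close> stay in a compact
  subinterval of \<open>(0, \<infinity>)\<close>, so a second-order Taylor bound for \<open>\<phi>\<^sub>\<theta>\<close> controls the error of the
  linearisation; this gives continuity of all entries and differentiability of those with
  \<open>\<lambda>\<^sub>i = \<lambda>\<^sub>j\<close>. For \<open>\<lambda>\<^sub>i \<noteq> \<lambda>\<^sub>j\<close> the commutation of \<open>\<phi>\<^sub>\<theta>(\<Sigma> + tX)\<close> with \<open>\<Sigma> + tX\<close> expresses the
  difference quotient through the continuous entries.\<close>

lemma taylor_quadratic_remainder_bound:
  fixes f f' f'' :: "real \<Rightarrow> real"
  assumes f: "\<And>x. x \<in> {m..M} \<Longrightarrow> (f has_real_derivative f' x) (at x)"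
    and f': "\<And>x. x \<in> {m..M} \<Longrightarrow> (f' has_real_derivative f'' x) (at x)"
    and f'': "continuous_on {m..M} f''"
  obtains K where "0 \<le> K"
    "\<And>a y. a \<in> {m..M} \<Longrightarrow> y \<in> {m..M} \<Longrightarrow> \<bar>f y - f a - f' a * (y - a)\<bar> \<le> K * (y - a)\<^sup>2"
proof -
  have "bounded (f'' ` {m..M})"
    by (rule compact_imp_bounded[OF compact_continuous_image[OF f'' compact_Icc]])
  then obtain B where B: "\<And>x. x \<in> {m..M} \<Longrightarrow> \<bar>f'' x\<bar> \<le> B"
    unfolding bounded_real by blast
  define diff :: "nat \<Rightarrow> real \<Rightarrow> real"
    where "diff n = (if n = 0 then f else if n = 1 then f' else f'')" for n
  have "\<bar>f y - f a - f' a * (y - a)\<bar> \<le> \<bar>B\<bar> / 2 * (y - a)\<^sup>2"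
    if a: "a \<in> {m..M}" and y: "y \<in> {m..M}" for a y
  proof (cases "y = a")
    case False
    have "\<forall>n t. n < 2 \<and> m \<le> t \<and> t \<le> M \<longrightarrow> (diff n has_real_derivative diff (Suc n) t) (at t)"
      using f f' by (auto simp: diff_def less_2_cases_iff)
    then obtain t where t: "if y < a then y < t \<and> t < a else a < t \<and> t < y"
      and taylor: "f y = (\<Sum>n<2. diff n a / fact n * (y - a) ^ n) + diff 2 t / fact 2 * (y - a)\<^sup>2"
      using Taylor[of 2 diff f m M a y] a y False by (auto simp: diff_def)
    have "t \<in> {m..M}"
      using t a y by (auto split: if_splits)
    have "f y - f a - f' a * (y - a) = f'' t / 2 * (y - a)\<^sup>2"
      using taylor by (simp add: diff_def numeral_2_eq_2)
    then have "\<bar>f y - f a - f' a * (y - a)\<bar> = \<bar>f'' t\<bar> / 2 * (y - a)\<^sup>2"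
      by (simp only: abs_mult abs_divide abs_power2 abs_numeral)
    also have "\<dots> \<le> \<bar>B\<bar> / 2 * (y - a)\<^sup>2"
      using B[OF \<open>t \<in> {m..M}\<close>] by (intro mult_right_mono) auto
    finally show ?thesis .
  qed simp
  then show ?thesis
    using that[of "\<bar>B\<bar> / 2"] by simp
qed

lemma has_real_derivative_if_quadratic_error:
  fixes g :: "real \<Rightarrow> real"
  assumes "\<forall>\<^sub>F y in nhds x. \<bar>g y - g x - D * (y - x)\<bar> \<le> C * (y - x)\<^sup>2"
  shows "(g has_real_derivative D) (at x)"
proof -
  have "\<forall>\<^sub>F y in at x. norm ((g y - g x) / (y - x) - D) \<le> C * \<bar>y - x\<bar>"
    using assms unfolding eventually_at_filter
  proof (rule eventually_mono, intro impI)
    fix y assume bound: "\<bar>g y - g x - D * (y - x)\<bar> \<le> C * (y - x)\<^sup>2" and "y \<noteq> x"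
    then have "norm ((g y - g x) / (y - x) - D) = \<bar>g y - g x - D * (y - x)\<bar> / \<bar>y - x\<bar>"
      by (simp add: field_simps)
    also have "\<dots> \<le> C * \<bar>y - x\<bar>"
      using bound \<open>y \<noteq> x\<close> by (simp add: divide_le_eq power2_eq_square abs_mult_self_eq mult.assoc)
    finally show "norm ((g y - g x) / (y - x) - D) \<le> C * \<bar>y - x\<bar>" .
  qed
  moreover have "((\<lambda>y. C * \<bar>y - x\<bar>) \<longlongrightarrow> 0) (at x)"
    by (rule tendsto_eq_intros | simp)+
  ultimately have "((\<lambda>y. (g y - g x) / (y - x) - D) \<longlongrightarrow> 0) (at x)"
    by (rule Lim_null_comparison)
  then show ?thesis
    by (simp add: has_field_derivative_iff LIM_zero_iff)
qed

lemma isCont_if_linear_error: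
  fixes g :: "real \<Rightarrow> real"
  assumes "\<forall>\<^sub>F y in nhds x. \<bar>g y - g x\<bar> \<le> C * \<bar>y - x\<bar>"
  shows "isCont g x"
proof -
  have "\<forall>\<^sub>F y in at x. norm (g y - g x) \<le> C * \<bar>y - x\<bar>"
    using assms by (simp add: eventually_at_filter eventually_mono)
  moreover have "((\<lambda>y. C * \<bar>y - x\<bar>) \<longlongrightarrow> 0) (at x)"
    by (rule tendsto_eq_intros | simp)+
  ultimately have "((\<lambda>y. g y - g x) \<longlongrightarrow> 0) (at x)"
    by (rule Lim_null_comparison)
  then show ?thesis
    by (simp add: isCont_def LIM_zero_iff)
qed

lemma has_vector_derivative_vec_lambda:
  fixes g :: "'i::finite \<Rightarrow> real \<Rightarrow> 'a::real_normed_vector"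
  assumes "\<And>i. (g i has_vector_derivative g' i) F"
  shows "((\<lambda>t. \<chi> i. g i t) has_vector_derivative (\<chi> i. g' i)) F"
proof -
  have axis_sum: "(\<chi> i. h i) = (\<Sum>i\<in>UNIV. axis i (h i))" for h :: "'i \<Rightarrow> 'a"
    by (simp add: vec_eq_iff sum_component axis_def)
  have linear_axis: "bounded_linear (axis i :: 'a \<Rightarrow> 'a^'i)" for i
  proof (rule bounded_linear_intro[of _ 1])
    show "norm (axis i x) \<le> norm x * 1" for x :: 'a
      unfolding norm_vec_def using L2_set_le_sum[of UNIV "\<lambda>j. norm (axis i x $ j)"]
      by (simp add: axis_def if_distrib sum.delta cong: if_cong)
  qed (auto simp: axis_def vec_eq_iff)
  have "((\<lambda>t. \<Sum>i\<in>UNIV. axis i (g i t)) has_vector_derivative (\<Sum>i\<in>UNIV. axis i (g' i))) F"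
    by (rule has_vector_derivative_sum, rule bounded_linear.has_vector_derivative[OF linear_axis assms])
  then show ?thesis
    by (simp only: axis_sum)
qed

section \<open>Divided differences and the scalar functions \<open>\<phi>\<^sub>\<theta>\<close>\<close>

definition divided_diff :: "(real \<Rightarrow> real) \<Rightarrow> (real \<Rightarrow> real) \<Rightarrow> real \<Rightarrow> real \<Rightarrow> real" where
  "divided_diff f f' x y = (if x = y then f' x else (f x - f y) / (x - y))"

lemma divided_diff_commute: "divided_diff f f' x y = divided_diff f f' y x"
  by (simp add: divided_diff_def divide_simps algebra_simps)

lemma divided_diff_pos:
  assumes f: "\<And>x. 0 < x \<Longrightarrow> (f has_real_derivative f' x) (at x)"
    and f'_pos: "\<And>x. 0 < x \<Longrightarrow> 0 < f' x"
    and "0 < x" "0 < y"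
  shows "0 < divided_diff f f' x y"
proof -
  have increasing: "0 < divided_diff f f' a b" if "0 < a" "a < b" for a b
  proof -
    obtain z where "a < z" "f b - f a = (b - a) * f' z"
      using MVT2[OF \<open>a < b\<close>, of f f'] f \<open>0 < a\<close> by force
    then have "0 < f b - f a"
      using f'_pos[of z] that by simp
    then show ?thesis
      using that by (simp add: divided_diff_def divide_neg_neg)
  qed
  show ?thesis
  proof (cases x y rule: linorder_cases)
    case less
    then show ?thesis using increasing[of x y] \<open>0 < x\<close> by blast
  next
    case equal
    then show ?thesis using f'_pos \<open>0 < x\<close> by (simp add: divided_diff_def)
  next
    case greater
    then show ?thesis using increasing[of y x] \<open>0 < y\<close> by (simp add: divided_diff_commute)
  qed
qed

text \<open>Powers are written as \<open>exp (\<theta> * ln x)\<close>, exactly as in \<open>mat_pow\<close>, so that \<open>phi \<theta>\<close> and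
  \<open>mat_fun (scalar_phi \<theta>)\<close> agree on all symmetric matrices, not only on positive definite ones.\<close>

definition scalar_phi :: "real \<Rightarrow> real \<Rightarrow> real" where
  "scalar_phi \<theta> x = (if \<theta> = 0 then ln x else exp (\<theta> * ln x) / \<theta>)"

definition scalar_phi' :: "real \<Rightarrow> real \<Rightarrow> real" where
  "scalar_phi' \<theta> x = exp ((\<theta> - 1) * ln x)"

lemma has_real_derivative_exp_mult_ln:
  assumes "0 < x"
  shows "((\<lambda>x. exp (c * ln x)) has_real_derivative c * exp ((c - 1) * ln x)) (at x)"
proof -
  have "((\<lambda>x. exp (c * ln x)) has_real_derivative exp (c * ln x) * (c * (1 / x))) (at x)"
    using assms by (auto intro!: derivative_eq_intros)
  moreover have "exp (c * ln x) * (c * (1 / x)) = c * exp ((c - 1) * ln x)"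
    using assms by (simp add: algebra_simps exp_diff)
  ultimately show ?thesis by simp
qed

lemma scalar_phi_has_real_derivative:
  assumes "0 < x"
  shows "(scalar_phi \<theta> has_real_derivative scalar_phi' \<theta> x) (at x)"
proof (cases "\<theta> = 0")
  case True
  have "(ln has_real_derivative 1 / x) (at x)"
    using assms by (auto intro!: derivative_eq_intros)
  then show ?thesis
    using True assms by (simp add: scalar_phi_def[abs_def] scalar_phi'_def exp_minus inverse_eq_divide)
next
  case False
  have "((\<lambda>x. exp (\<theta> * ln x) / \<theta>) has_real_derivative \<theta> * exp ((\<theta> - 1) * ln x) / \<theta>) (at x)"
    using has_real_derivative_exp_mult_ln[OF assms] by (rule DERIV_cdivide)
  then show ?thesis
    using False by (simp add: scalar_phi_def[abs_def] scalar_phi'_def)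
qed

lemma scalar_phi'_pos: "0 < scalar_phi' \<theta> x"
  by (simp add: scalar_phi'_def)

lemma scalar_phi'_has_real_derivative:
  assumes "0 < x"
  shows "(scalar_phi' \<theta> has_real_derivative (\<theta> - 1) * exp ((\<theta> - 2) * ln x)) (at x)"
  using has_real_derivative_exp_mult_ln[OF assms, of "\<theta> - 1"] by (simp add: scalar_phi'_def[abs_def])

lemma sym_mat_self_adjoint:
  fixes A :: "real^'n^'n"
  assumes "sym_mat A"
  shows "(A *v x) \<bullet> y = x \<bullet> (A *v y)"
proof -
  have "A *v x = x v* A"
    using assms by (simp add: sym_mat_def transpose_matrix_vector[symmetric])
  then show ?thesis by (simp add: dot_lmul_matrix)
qed

lemma sym_mat_add_scaleR: "sym_mat S \<Longrightarrow> sym_mat X \<Longrightarrow> sym_mat (S + t *\<^sub>R X)"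
  by (simp add: sym_mat_def transpose_def vec_eq_iff)

lemma orthogonal_matrix_transpose_mul: "orthogonal_matrix U \<Longrightarrow> transpose U ** U = mat 1"
  by (simp add: orthogonal_matrix_def)

lemma orthogonal_matrix_mul_transpose: "orthogonal_matrix U \<Longrightarrow> U ** transpose U = mat 1"
  by (simp add: orthogonal_matrix_def)

lemma orthogonal_matrix_column_inner:
  "orthogonal_matrix (U :: real^'n^'n) \<Longrightarrow> column i U \<bullet> column j U = (if i = j then 1 else 0)"
  by (auto simp: orthogonal_matrix_orthonormal_columns orthogonal_def norm_eq_1)

lemma norm_column_orthogonal_matrix: "orthogonal_matrix (U :: real^'n^'n) \<Longrightarrow> norm (column i U) = 1"
  by (simp add: orthogonal_matrix_orthonormal_columns)

lemma matrix_mul_nth_eq_mult_column: "(M ** U) $ i $ j = (M *v column j U) $ i"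
  by (simp add: matrix_matrix_mult_def matrix_vector_mult_def column_def)

lemma transpose_conj_nth: "(transpose U ** M ** U) $ i $ j = column i U \<bullet> (M *v column j U)"
proof -
  have "(transpose U ** M ** U) $ i $ j = (transpose U *v (M *v column j U)) $ i"
    by (simp add: matrix_mul_nth_eq_mult_column matrix_vector_mul_assoc del: transpose_matrix_vector)
  also have "\<dots> = column i U \<bullet> (M *v column j U)"
    by (simp add: matrix_vector_mult_def inner_vec_def column_def transpose_def del: transpose_matrix_vector)
  finally show ?thesis .
qed

lemma sym_mat_transpose_conj_nth:
  assumes "sym_mat Y"
  shows "(transpose U ** Y ** U) $ j $ i = (transpose U ** Y ** U) $ i $ j"
  using sym_mat_self_adjoint[OF assms, of "column i U" "column j U"]
  by (simp add: transpose_conj_nth inner_commute)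

lemma matrix_add_rdistrib: "(A + B) ** C = A ** C + B ** C"
  by (vector matrix_matrix_mult_def sum.distrib[symmetric] field_simps)

lemma transpose_conj_add_scaleR:
  fixes U X Z :: "real^'n^'n"
  shows "transpose U ** (X + a *\<^sub>R Z) ** U = transpose U ** X ** U + a *\<^sub>R (transpose U ** Z ** U)"
  by (simp add: matrix_add_ldistrib matrix_add_rdistrib matrix_scalar_ac scalar_matrix_assoc)

lemma orthogonal_matrix_conj_transpose_conj:
  assumes "orthogonal_matrix U"
  shows "U ** (transpose U ** M ** U) ** transpose U = M"
  using orthogonal_matrix_mul_transpose[OF assms]
  by (simp add: matrix_mul_assoc) (simp add: matrix_mul_assoc[symmetric])

lemma orthogonal_matrix_transpose_conj_eq_0_iff:
  fixes U X :: "real^'n^'n"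
  assumes "orthogonal_matrix U"
  shows "transpose U ** X ** U = 0 \<longleftrightarrow> X = 0"
  using orthogonal_matrix_conj_transpose_conj[OF assms, of X] by auto

lemma orthogonal_matrix_conj_mul:
  assumes "orthogonal_matrix U"
  shows "(transpose U ** A ** U) ** (transpose U ** B ** U) = transpose U ** (A ** B) ** U"
proof -
  have "(transpose U ** A ** U) ** (transpose U ** B ** U) = transpose U ** A ** (U ** transpose U) ** B ** U"
    by (simp add: matrix_mul_assoc)
  then show ?thesis
    by (simp add: orthogonal_matrix_mul_transpose[OF assms] matrix_mul_assoc)
qed

lemma trace_orthogonal_conj:
  fixes U M :: "real^'n^'n"
  assumes "orthogonal_matrix U"
  shows "trace (U ** M ** transpose U) = trace M"
proof -
  have "trace (U ** M ** transpose U) = trace ((M ** transpose U) ** U)"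
    using trace_mul_sym[of U "M ** transpose U"] by (simp add: matrix_mul_assoc)
  then show ?thesis
    by (simp add: matrix_mul_assoc[symmetric] orthogonal_matrix_transpose_mul[OF assms])
qed

lemma matrix_mul_diag_mat_nth: "(M ** diag_mat d) $ i $ j = M $ i $ j * d $ j"
  by (simp add: diag_mat_def matrix_matrix_mult_def if_distrib cong: if_cong)

lemma diag_mat_mul_nth: "(diag_mat d ** M) $ i $ j = d $ i * M $ i $ j"
proof -
  have "(diag_mat d ** M) $ i $ j = (\<Sum>k\<in>UNIV. if k = i then d $ i * M $ i $ j else 0)"
    unfolding diag_mat_def matrix_matrix_mult_def vec_lambda_beta by (intro sum.cong) auto
  then show ?thesis by simp
qed

lemma diag_mat_mult_vector: "diag_mat d *v w = (\<chi> i. d $ i * w $ i)"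
proof -
  have "(diag_mat d *v w) $ i = (\<Sum>k\<in>UNIV. if k = i then d $ i * w $ i else 0)" for i
    unfolding diag_mat_def matrix_vector_mult_def vec_lambda_beta by (intro sum.cong) auto
  then show ?thesis by (simp add: vec_eq_iff)
qed

lemma diag_mat_mul_diag_mat: "diag_mat a ** diag_mat b = diag_mat (\<chi> i. a $ i * b $ i)"
  by (simp add: vec_eq_iff matrix_mul_diag_mat_nth) (simp add: diag_mat_def)

lemma trace_diag_mat_mul:
  "trace (diag_mat p ** A ** diag_mat p ** B) = (\<Sum>i\<in>UNIV. \<Sum>j\<in>UNIV. p $ i * A $ i $ j * p $ j * B $ j $ i)"
  by (simp add: trace_def matrix_matrix_mult_def[of "diag_mat p ** A ** diag_mat p" B]
      matrix_mul_diag_mat_nth diag_mat_mul_nth mult_ac)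

lemma conj_diag_mat_nth:
  "(U ** diag_mat x ** transpose U) $ i $ j = (\<Sum>k\<in>UNIV. U $ i $ k * x $ k * U $ j $ k)"
  by (simp add: matrix_matrix_mult_def matrix_mul_diag_mat_nth[unfolded matrix_matrix_mult_def, simplified]
      transpose_def)

lemma scaleR_conj_diag_mat:
  "c *\<^sub>R (U ** diag_mat x ** transpose U) = U ** diag_mat (\<chi> i. c * x $ i) ** transpose U"
  by (simp add: vec_eq_iff conj_diag_mat_nth sum_distrib_left mult_ac)

lemma sym_mat_conj_diag_mat: "sym_mat (U ** diag_mat d ** transpose U)"
proof -
  have "transpose (U ** diag_mat d ** transpose U) $ i $ j = (U ** diag_mat d ** transpose U) $ i $ j" for i j
  proof -
    have "transpose (U ** diag_mat d ** transpose U) $ i $ j = (U ** diag_mat d ** transpose U) $ j $ i"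
      by (simp add: transpose_def)
    then show ?thesis
      unfolding conj_diag_mat_nth by (simp add: mult_ac)
  qed
  then show ?thesis by (simp add: sym_mat_def vec_eq_iff)
qed

lemma conj_diag_mat_inner:
  fixes V :: "real^'n^'n"
  shows "((V ** diag_mat g ** transpose V) *v a) \<bullet> b
       = (\<Sum>k\<in>UNIV. g $ k * (column k V \<bullet> a) * (column k V \<bullet> b))"
proof -
  have "((V ** diag_mat g ** transpose V) *v a) \<bullet> b
      = (\<Sum>i\<in>UNIV. (\<Sum>j\<in>UNIV. (\<Sum>k\<in>UNIV. V $ i $ k * g $ k * V $ j $ k) * a $ j) * b $ i)"
    by (simp add: inner_vec_def matrix_vector_mult_def conj_diag_mat_nth)
  also have "\<dots> = (\<Sum>i\<in>UNIV. \<Sum>j\<in>UNIV. \<Sum>k\<in>UNIV. g $ k * (V $ j $ k * a $ j) * (V $ i $ k * b $ i))"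
    by (simp add: sum_distrib_left sum_distrib_right mult_ac)
  also have "\<dots> = (\<Sum>k\<in>UNIV. \<Sum>j\<in>UNIV. \<Sum>i\<in>UNIV. g $ k * (V $ j $ k * a $ j) * (V $ i $ k * b $ i))"
    by (subst sum.swap, subst (2) sum.swap) (rule sum.cong[OF refl], rule sum.swap)
  also have "\<dots> = (\<Sum>k\<in>UNIV. g $ k * (column k V \<bullet> a) * (column k V \<bullet> b))"
    by (simp add: inner_vec_def column_def sum_distrib_left sum_distrib_right mult_ac)
  finally show ?thesis .
qed

lemma orthogonal_matrix_parseval:
  fixes V :: "real^'n^'n"
  assumes "orthogonal_matrix V"
  shows "(\<Sum>k\<in>UNIV. (column k V \<bullet> a) * (column k V \<bullet> b)) = a \<bullet> b"
proof -
  have "V ** diag_mat (\<chi> i. 1) ** transpose V = mat 1"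
  proof -
    have "diag_mat (\<chi> i. 1) = (mat 1 :: real^'n^'n)"
      by (simp add: diag_mat_def mat_def vec_eq_iff)
    then show ?thesis
      by (simp add: orthogonal_matrix_mul_transpose[OF assms])
  qed
  then show ?thesis
    using conj_diag_mat_inner[of V "\<chi> i. 1" a b] by simp
qed

lemma orthogonal_matrix_sum_abs_coeff_le:
  fixes V :: "real^'n^'n"
  assumes oV: "orthogonal_matrix V"
  shows "(\<Sum>k\<in>UNIV. \<bar>column k V \<bullet> a\<bar> * \<bar>column k V \<bullet> b\<bar>) \<le> norm a * norm b"
proof -
  define p where "p c = (\<chi> k. \<bar>column k V \<bullet> c\<bar>)" for c
  have "norm (p c) = norm c" for c
    using orthogonal_matrix_parseval[OF oV, of c c]
    by (simp add: p_def norm_eq_sqrt_inner inner_vec_def abs_mult_self_eq)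
  moreover have "p a \<bullet> p b = (\<Sum>k\<in>UNIV. \<bar>column k V \<bullet> a\<bar> * \<bar>column k V \<bullet> b\<bar>)"
    by (simp add: p_def inner_vec_def)
  ultimately show ?thesis
    using norm_cauchy_schwarz[of "p a" "p b"] by simp
qed

section \<open>The spectral theorem\<close>

lemma eq_0_if_linear_le_quadratic:
  fixes a c :: real
  assumes "0 \<le> a" and le: "\<And>s. 2 * s * a \<le> s\<^sup>2 * c"
  shows "a = 0"
proof (rule ccontr)
  assume "a \<noteq> 0"
  with \<open>0 \<le> a\<close> have "0 < a" by simp
  define s where "s = a / (\<bar>c\<bar> + 1)"
  have "0 < s" using \<open>0 < a\<close> by (simp add: s_def)
  have "2 * a \<le> s * c"
    using le[of s] \<open>0 < s\<close> by (simp add: power2_eq_square)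
  also have "\<dots> \<le> s * \<bar>c\<bar>" using \<open>0 < s\<close> by (simp add: mult_left_mono)
  also have "\<dots> < a" using \<open>0 < a\<close> by (simp add: s_def field_simps)
  finally show False using \<open>0 < a\<close> by simp
qed

lemma sym_mat_rayleigh_maximizer_eigenvector:
  fixes A :: "real^'n^'n"
  assumes sA: "sym_mat A" and V: "subspace V" and inv: "\<forall>x\<in>V. A *v x \<in> V"
    and x0V: "x0 \<in> V" and x0: "norm x0 = 1"
    and max: "\<And>z. z \<in> V \<Longrightarrow> norm z = 1 \<Longrightarrow> z \<bullet> (A *v z) \<le> x0 \<bullet> (A *v x0)"
  shows "A *v x0 = (x0 \<bullet> (A *v x0)) *\<^sub>R x0"
proof -
  define l where "l = x0 \<bullet> (A *v x0)"
  define w where "w = A *v x0 - l *\<^sub>R x0"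
  have x0x0: "x0 \<bullet> x0 = 1"
    using x0 by (simp add: norm_eq_1)
  have wV: "w \<in> V"
    unfolding w_def using x0V inv V by (simp add: subspace_diff subspace_scale)
  have wx0: "x0 \<bullet> w = 0"
    unfolding w_def l_def by (simp add: inner_diff_right x0x0)
  have wAx0: "w \<bullet> (A *v x0) = w \<bullet> w"
  proof -
    have "A *v x0 = w + l *\<^sub>R x0" by (simp add: w_def)
    then show ?thesis using wx0 by (simp add: inner_add_right inner_commute)
  qed
  txt \<open>\<open>w\<close> is the component of \<open>A x0\<close> orthogonal to \<open>x0\<close>; moving from \<open>x0\<close> towards \<open>w\<close> would
    increase the Rayleigh quotient to first order unless \<open>w = 0\<close>.\<close>
  have le_l: "(x0 + s *\<^sub>R w) \<bullet> (A *v (x0 + s *\<^sub>R w)) \<le> l * ((x0 + s *\<^sub>R w) \<bullet> (x0 + s *\<^sub>R w))" for s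
  proof (cases "x0 + s *\<^sub>R w = 0")
    case False
    define z where "z = x0 + s *\<^sub>R w"
    have "z \<in> V" unfolding z_def using x0V wV V by (simp add: subspace_add subspace_scale)
    then have "(z /\<^sub>R norm z) \<bullet> (A *v (z /\<^sub>R norm z)) \<le> l"
      using max[of "z /\<^sub>R norm z"] V False by (simp add: subspace_scale z_def l_def)
    then have "(z \<bullet> (A *v z)) / (norm z)\<^sup>2 \<le> l"
      by (simp add: matrix_vector_mult_scaleR power2_eq_square divide_inverse mult_ac)
    then show ?thesis
      using False by (simp add: z_def divide_le_eq power2_norm_eq_inner)
  qed simp
  have expand_form: "(x0 + s *\<^sub>R w) \<bullet> (A *v (x0 + s *\<^sub>R w)) = l + 2 * s * (w \<bullet> w) + s\<^sup>2 * (w \<bullet> (A *v w))" for s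
  proof -
    have "w \<bullet> (A *v x0) = x0 \<bullet> (A *v w)"
      using sym_mat_self_adjoint[OF sA, of w x0] by (simp add: inner_commute)
    then show ?thesis using wAx0
      by (simp add: matrix_vector_right_distrib matrix_vector_mult_scaleR inner_add_left inner_add_right
          l_def power2_eq_square algebra_simps)
  qed
  have expand_norm: "(x0 + s *\<^sub>R w) \<bullet> (x0 + s *\<^sub>R w) = 1 + s\<^sup>2 * (w \<bullet> w)" for s
    using wx0 x0x0 by (simp add: inner_add_left inner_add_right inner_commute power2_eq_square algebra_simps)
  have "2 * s * (w \<bullet> w) \<le> s\<^sup>2 * (l * (w \<bullet> w) - w \<bullet> (A *v w))" for s
    using le_l[of s] unfolding expand_form expand_norm by (simp add: algebra_simps)
  then have "w \<bullet> w = 0"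
    by (intro eq_0_if_linear_le_quadratic) simp_all
  then show ?thesis
    by (simp add: w_def l_def)
qed

lemma sym_mat_unit_eigenvector_in_subspace:
  fixes A :: "real^'n^'n"
  assumes sA: "sym_mat A" and V: "subspace V" and inv: "\<forall>x\<in>V. A *v x \<in> V"
    and ne: "V \<noteq> {0}"
  shows "\<exists>x\<in>V. norm x = 1 \<and> (\<exists>l. A *v x = l *\<^sub>R x)"
proof -
  let ?K = "V \<inter> sphere 0 1"
  have compact: "compact ?K"
    by (rule closed_Int_compact[OF closed_subspace[OF V] compact_sphere])
  have nonempty: "?K \<noteq> {}"
  proof -
    obtain y where "y \<in> V" "y \<noteq> 0" using ne V subspace_0 by blast
    then have "y /\<^sub>R norm y \<in> ?K" using V by (simp add: subspace_scale)
    then show ?thesis by blast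
  qed
  have continuous: "continuous_on ?K (\<lambda>x. x \<bullet> (A *v x))"
  proof -
    have "continuous_on ?K (\<lambda>x. A *v x)"
      by (rule linear_continuous_on[OF matrix_vector_mul_bounded_linear])
    then show ?thesis by (intro continuous_intros)
  qed
  obtain x0 where x0: "x0 \<in> ?K" and max: "\<And>z. z \<in> ?K \<Longrightarrow> z \<bullet> (A *v z) \<le> x0 \<bullet> (A *v x0)"
    using continuous_attains_sup[OF compact nonempty continuous] by blast
  have "A *v x0 = (x0 \<bullet> (A *v x0)) *\<^sub>R x0"
    using x0 max by (intro sym_mat_rayleigh_maximizer_eigenvector[OF sA V inv]) auto
  then show ?thesis
    using x0 by auto
qed

lemma span_insert_orthogonal_complement:
  fixes x0 :: "'a::euclidean_space"
  assumes V: "subspace V" and x0: "x0 \<in> V" "x0 \<bullet> x0 = 1"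
    and B: "span B = {y \<in> V. x0 \<bullet> y = 0}"
  shows "span (insert x0 B) = V"
proof
  have "B \<subseteq> V"
    using B span_superset[of B] by blast
  then show "span (insert x0 B) \<subseteq> V"
    using V x0 by (simp add: span_minimal)
  show "V \<subseteq> span (insert x0 B)"
  proof
    fix v assume "v \<in> V"
    then have "v - (x0 \<bullet> v) *\<^sub>R x0 \<in> span B"
      unfolding B using x0 V by (auto simp: subspace_diff subspace_scale inner_diff_right)
    then have "v - (x0 \<bullet> v) *\<^sub>R x0 \<in> span (insert x0 B)"
      using span_mono[of B "insert x0 B"] by blast
    moreover have "(x0 \<bullet> v) *\<^sub>R x0 \<in> span (insert x0 B)"
      by (simp add: span_base span_scale)
    ultimately have "(v - (x0 \<bullet> v) *\<^sub>R x0) + (x0 \<bullet> v) *\<^sub>R x0 \<in> span (insert x0 B)"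
      by (rule span_add)
    then show "v \<in> span (insert x0 B)" by simp
  qed
qed

lemma sym_mat_orthonormal_eigenvectors_span_subspace:
  fixes A :: "real^'n^'n"
  assumes sA: "sym_mat A"
  shows "subspace V \<Longrightarrow> (\<forall>x\<in>V. A *v x \<in> V) \<Longrightarrow>
    \<exists>B. B \<subseteq> V \<and> pairwise orthogonal B \<and> (\<forall>x\<in>B. norm x = 1 \<and> (\<exists>l. A *v x = l *\<^sub>R x))
      \<and> span B = V"
proof (induction "dim V" arbitrary: V rule: less_induct)
  case less
  show ?case
  proof (cases "V = {0}")
    case True
    then show ?thesis by (intro exI[of _ "{}"]) auto
  next
    case False
    obtain x0 l where x0: "x0 \<in> V" "norm x0 = 1" and ev: "A *v x0 = l *\<^sub>R x0"
      using sym_mat_unit_eigenvector_in_subspace[OF sA less.prems False] by blast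
    define V' where "V' = {y\<in>V. x0 \<bullet> y = 0}"
    have sV': "subspace V'"
      unfolding V'_def using less.prems(1) by (auto simp: subspace_def inner_add_right)
    have invV': "\<forall>x\<in>V'. A *v x \<in> V'"
    proof
      fix x assume x: "x \<in> V'"
      have "x0 \<bullet> (A *v x) = (A *v x0) \<bullet> x"
        using sym_mat_self_adjoint[OF sA] by simp
      also have "\<dots> = 0"
        using x by (simp add: ev V'_def)
      finally show "A *v x \<in> V'"
        using less.prems(2) x by (simp add: V'_def)
    qed
    have "V' \<subset> V"
      unfolding V'_def using x0 by (force simp: norm_eq_1)
    then have "dim V' < dim V"
      using sV' less.prems(1) dim_psubset[of V' V] by (simp add: span_eq_iff[THEN iffD2])
    then obtain B' where B': "B' \<subseteq> V'" "pairwise orthogonal B'"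
        "\<forall>x\<in>B'. norm x = 1 \<and> (\<exists>l. A *v x = l *\<^sub>R x)" "span B' = V'"
      using less.hyps[OF _ sV' invV'] by blast
    have "insert x0 B' \<subseteq> V"
      using B'(1) x0 by (auto simp: V'_def)
    moreover have "pairwise orthogonal (insert x0 B')"
      using B'(1,2) unfolding pairwise_insert by (auto simp: V'_def orthogonal_def inner_commute)
    moreover have "span (insert x0 B') = V"
      using span_insert_orthogonal_complement[OF less.prems(1) x0(1) _ B'(4)[unfolded V'_def]] x0(2)
      by (simp add: norm_eq_1)
    ultimately show ?thesis
      using B'(3) x0 ev by (intro exI[of _ "insert x0 B'"]) auto
  qed
qed

lemma sym_mat_orthonormal_eigenvector_family:
  fixes A :: "real^'n^'n"
  assumes "sym_mat A"
  obtains g :: "'n \<Rightarrow> real^'n" where "\<And>j. norm (g j) = 1" "\<And>j. \<exists>l. A *v g j = l *\<^sub>R g j"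
    "\<And>i j. i \<noteq> j \<Longrightarrow> orthogonal (g i) (g j)"
proof -
  obtain B where B: "pairwise orthogonal B" "\<forall>x\<in>B. norm x = 1 \<and> (\<exists>l. A *v x = l *\<^sub>R x)"
      "span B = UNIV"
    using sym_mat_orthonormal_eigenvectors_span_subspace[OF assms, of UNIV] by auto
  have indB: "independent B"
    using B(1,2) by (intro pairwise_orthogonal_independent) auto
  then have "card B = CARD('n)"
    using dim_span_eq_card_independent[OF indB] B(3) by simp
  then obtain g where g: "bij_betw g (UNIV :: 'n set) B"
    using finite_same_card_bij[OF finite_class.finite_UNIV independent_imp_finite[OF indB]] by metis
  then have "g j \<in> B" "g i \<noteq> g j \<or> i = j" for i j
    by (auto simp: bij_betw_def inj_on_def)
  then show ?thesis
    using that B(1,2) unfolding pairwise_def by metis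
qed

lemma sym_mat_spectral_decomposition:
  fixes A :: "real^'n^'n"
  assumes sA: "sym_mat A"
  obtains U d where "orthogonal_matrix U" "A = U ** diag_mat d ** transpose U"
proof -
  obtain g :: "'n \<Rightarrow> real^'n" where unit: "\<And>j. norm (g j) = 1"
    and eigen: "\<And>j. \<exists>l. A *v g j = l *\<^sub>R g j" and orth: "\<And>i j. i \<noteq> j \<Longrightarrow> orthogonal (g i) (g j)"
    using sym_mat_orthonormal_eigenvector_family[OF sA] by metis
  define U :: "real^'n^'n" where "U = (\<chi> i j. g j $ i)"
  define d :: "real^'n" where "d = (\<chi> j. g j \<bullet> (A *v g j))"
  have column_U: "column j U = g j" for j
    by (simp add: U_def column_def vec_eq_iff)
  have oU: "orthogonal_matrix U"
    unfolding orthogonal_matrix_orthonormal_columns column_U by (simp add: unit orth)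
  have "(A ** U) $ i $ j = (U ** diag_mat d) $ i $ j" for i j
  proof -
    obtain l where "A *v g j = l *\<^sub>R g j"
      using eigen by blast
    moreover have "g j \<bullet> g j = 1"
      using unit by (simp add: norm_eq_1)
    ultimately have "A *v g j = d $ j *\<^sub>R g j"
      by (simp add: d_def)
    then have "(A ** U) $ i $ j = d $ j * g j $ i"
      by (simp add: matrix_mul_nth_eq_mult_column column_U)
    then show ?thesis
      by (simp add: matrix_mul_diag_mat_nth U_def mult.commute)
  qed
  then have "A ** U = U ** diag_mat d"
    by (simp add: vec_eq_iff)
  then have "A ** (U ** transpose U) = U ** diag_mat d ** transpose U"
    by (simp add: matrix_mul_assoc)
  then have "A = U ** diag_mat d ** transpose U"
    by (simp add: orthogonal_matrix_mul_transpose[OF oU])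
  then show ?thesis using that oU by blast
qed

lemma spectral_decomposition_mult_column:
  fixes U :: "real^'n^'n"
  assumes oU: "orthogonal_matrix U" and A: "A = U ** diag_mat d ** transpose U"
  shows "A *v column j U = d $ j *\<^sub>R column j U"
proof -
  have "A ** U = U ** diag_mat d ** (transpose U ** U)"
    by (simp add: A matrix_mul_assoc)
  then have "A ** U = U ** diag_mat d"
    by (simp add: orthogonal_matrix_transpose_mul[OF oU])
  then have "(A *v column j U) $ i = (d $ j *\<^sub>R column j U) $ i" for i
    using matrix_mul_nth_eq_mult_column[of A U i j]
    by (simp add: matrix_mul_diag_mat_nth column_def mult.commute)
  then show ?thesis by (simp add: vec_eq_iff)
qed

lemma spd_spectral_decomposition:
  fixes S :: "real^'n^'n"
  assumes "spd S"
  obtains U d where "orthogonal_matrix U" "S = U ** diag_mat d ** transpose U" "\<And>i. 0 < d $ i"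
proof -
  obtain U d where oU: "orthogonal_matrix U" and S: "S = U ** diag_mat d ** transpose U"
    using sym_mat_spectral_decomposition assms unfolding spd_def by blast
  have "0 < d $ i" for i
  proof -
    have unit: "norm (column i U) = 1"
      by (rule norm_column_orthogonal_matrix[OF oU])
    then have "column i U \<noteq> 0"
      by auto
    then have "0 < column i U \<bullet> (S *v column i U)"
      using assms by (simp add: spd_def)
    also have "column i U \<bullet> (S *v column i U) = d $ i"
      using unit by (simp add: spectral_decomposition_mult_column[OF oU S] norm_eq_1)
    finally show ?thesis .
  qed
  then show ?thesis using that oU S by blast
qed

section \<open>Functional calculus\<close>

lemma conj_diag_mat_fun_mult_eigenvector:
  fixes U :: "real^'n^'n"
  assumes oU: "orthogonal_matrix U" and A: "A = U ** diag_mat d ** transpose U"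
    and ev: "A *v v = c *\<^sub>R v"
  shows "(U ** diag_mat (\<chi> i. f (d $ i)) ** transpose U) *v v = f c *\<^sub>R v"
proof -
  define w where "w = transpose U *v v"
  have vw: "v = U *v w"
    unfolding w_def matrix_vector_mul_assoc orthogonal_matrix_mul_transpose[OF oU] by simp
  have "U *v (diag_mat d *v w) = A *v v"
    by (simp add: A w_def matrix_vector_mul_assoc matrix_mul_assoc del: transpose_matrix_vector)
  also have "\<dots> = U *v (c *\<^sub>R w)"
    using ev vw by (simp add: matrix_vector_mult_scaleR)
  finally have "transpose U *v (U *v (diag_mat d *v w)) = transpose U *v (U *v (c *\<^sub>R w))"
    by simp
  then have "diag_mat d *v w = c *\<^sub>R w"
    unfolding matrix_vector_mul_assoc matrix_mul_assoc orthogonal_matrix_transpose_mul[OF oU] by simp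
  then have "d $ i * w $ i = c * w $ i" for i
    by (simp add: diag_mat_mult_vector vec_eq_iff)
  then have "f (d $ i) * w $ i = f c * w $ i" for i
    by (cases "w $ i = 0") auto
  then have fw: "diag_mat (\<chi> i. f (d $ i)) *v w = f c *\<^sub>R w"
    by (simp add: diag_mat_mult_vector vec_eq_iff)
  have "(U ** diag_mat (\<chi> i. f (d $ i)) ** transpose U) *v v = U *v (diag_mat (\<chi> i. f (d $ i)) *v w)"
    by (simp add: w_def matrix_vector_mul_assoc matrix_mul_assoc del: transpose_matrix_vector)
  also have "\<dots> = f c *\<^sub>R v"
    using vw by (simp add: fw matrix_vector_mult_scaleR)
  finally show ?thesis .
qed

lemma mat_fun_spectral:
  fixes U :: "real^'n^'n"
  assumes oU: "orthogonal_matrix U" and A: "A = U ** diag_mat d ** transpose U"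
  shows "mat_fun f A = U ** diag_mat (\<chi> i. f (d $ i)) ** transpose U"
  unfolding mat_fun_def
proof (rule the_equality)
  fix M assume "\<exists>U' d'. orthogonal_matrix U' \<and> A = U' ** diag_mat d' ** transpose U' \<and>
      M = U' ** diag_mat (\<chi> i. f (d' $ i)) ** transpose U'"
  then obtain U' d' where oU': "orthogonal_matrix U'" and A': "A = U' ** diag_mat d' ** transpose U'"
    and M: "M = U' ** diag_mat (\<chi> i. f (d' $ i)) ** transpose U'" by blast
  txt \<open>Both candidates act as \<open>f (d $ j)\<close> on the eigenvector \<open>column j U\<close>.\<close>
  have "M *v column j U = (U ** diag_mat (\<chi> i. f (d $ i)) ** transpose U) *v column j U" for j
  proof -
    note ev = spectral_decomposition_mult_column[OF oU A, of j]
    show ?thesis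
      unfolding M conj_diag_mat_fun_mult_eigenvector[OF oU' A' ev]
        conj_diag_mat_fun_mult_eigenvector[OF oU A ev] ..
  qed
  then have "M ** U = (U ** diag_mat (\<chi> i. f (d $ i)) ** transpose U) ** U"
    by (simp add: vec_eq_iff matrix_mul_nth_eq_mult_column)
  then have "M ** U ** transpose U = (U ** diag_mat (\<chi> i. f (d $ i)) ** transpose U) ** U ** transpose U"
    by simp
  then show "M = U ** diag_mat (\<chi> i. f (d $ i)) ** transpose U"
    by (simp add: matrix_mul_assoc[symmetric] orthogonal_matrix_mul_transpose[OF oU])
qed (use oU A in blast)

lemma mat_fun_mul_commute:
  fixes A :: "real^'n^'n"
  assumes "sym_mat A"
  shows "mat_fun f A ** A = A ** mat_fun f A"
proof -
  obtain V d where oV: "orthogonal_matrix V" and A: "A = V ** diag_mat d ** transpose V"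
    using sym_mat_spectral_decomposition[OF assms] .
  have conj_mul: "(V ** diag_mat x ** transpose V) ** (V ** diag_mat y ** transpose V)
      = V ** diag_mat (\<chi> i. x $ i * y $ i) ** transpose V" for x y
  proof -
    have "(V ** diag_mat x ** transpose V) ** (V ** diag_mat y ** transpose V)
      = V ** diag_mat x ** (transpose V ** V) ** diag_mat y ** transpose V"
      by (simp add: matrix_mul_assoc)
    also have "\<dots> = V ** (diag_mat x ** diag_mat y) ** transpose V"
      by (simp add: orthogonal_matrix_transpose_mul[OF oV] matrix_mul_assoc)
    finally show ?thesis
      by (simp add: diag_mat_mul_diag_mat)
  qed
  show ?thesis
    unfolding mat_fun_spectral[OF oV A] unfolding A conj_mul by (simp add: mult.commute)
qed

lemma mat_fun_mult_eigenvector: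
  fixes A :: "real^'n^'n"
  assumes "sym_mat A" and "A *v v = c *\<^sub>R v"
  shows "mat_fun f A *v v = f c *\<^sub>R v"
proof -
  obtain V d where oV: "orthogonal_matrix V" and A: "A = V ** diag_mat d ** transpose V"
    using sym_mat_spectral_decomposition[OF assms(1)] .
  show ?thesis
    unfolding mat_fun_spectral[OF oV A] by (rule conj_diag_mat_fun_mult_eigenvector[OF oV A assms(2)])
qed

lemma mat_fun_spectral_entry:
  fixes U S :: "real^'n^'n"
  assumes oU: "orthogonal_matrix U" and S: "S = U ** diag_mat lam ** transpose U"
  shows "column i U \<bullet> (mat_fun f S *v column j U) = f (lam $ i) * (if i = j then 1 else 0)"
proof -
  have "mat_fun f S *v column j U = f (lam $ j) *\<^sub>R column j U"
    using spectral_decomposition_mult_column[OF oU S]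
    by (intro mat_fun_mult_eigenvector) (simp_all add: S sym_mat_conj_diag_mat)
  then show ?thesis
    by (auto simp: orthogonal_matrix_column_inner[OF oU])
qed

lemma mat_pow_spectral:
  fixes U :: "real^'n^'n"
  assumes oU: "orthogonal_matrix U" and A: "A = U ** diag_mat d ** transpose U"
  shows "mat_pow \<theta> A = U ** diag_mat (\<chi> i. exp (\<theta> * ln (d $ i))) ** transpose U"
proof -
  have "\<theta> *\<^sub>R mat_log A = U ** diag_mat (\<chi> i. \<theta> * ln (d $ i)) ** transpose U"
    unfolding mat_log_def mat_fun_spectral[OF oU A] scaleR_conj_diag_mat by simp
  then show ?thesis
    unfolding mat_pow_def mat_exp_def by (simp add: mat_fun_spectral[OF oU])
qed

lemma phi_eq_mat_fun:
  fixes A :: "real^'n^'n"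
  assumes "sym_mat A"
  shows "phi \<theta> A = mat_fun (scalar_phi \<theta>) A"
proof -
  obtain U d where oU: "orthogonal_matrix U" and A: "A = U ** diag_mat d ** transpose U"
    using sym_mat_spectral_decomposition[OF assms] .
  show ?thesis
    by (simp add: phi_def scalar_phi_def mat_log_def mat_fun_spectral[OF oU A] mat_pow_spectral[OF oU A]
        scaleR_conj_diag_mat divide_inverse mult.commute)
qed

section \<open>Perturbation of the spectrum\<close>

lemma rayleigh_quotient_bounds:
  fixes U :: "real^'n^'n"
  assumes oU: "orthogonal_matrix U" and S: "S = U ** diag_mat lam ** transpose U"
    and lam: "\<And>i. lam $ i \<in> {lo..hi}" and v: "norm v = 1"
  shows "v \<bullet> (S *v v) \<in> {lo..hi}"
proof -
  have quadratic_form: "v \<bullet> (S *v v) = (\<Sum>i\<in>UNIV. lam $ i * (column i U \<bullet> v)\<^sup>2)"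
    using conj_diag_mat_inner[of U lam v v] S by (simp add: inner_commute power2_eq_square mult_ac)
  have weights: "(\<Sum>i\<in>UNIV. (column i U \<bullet> v)\<^sup>2) = 1"
    using orthogonal_matrix_parseval[OF oU, of v v] v by (simp add: power2_eq_square norm_eq_1)
  have "(\<Sum>i\<in>UNIV. lo * (column i U \<bullet> v)\<^sup>2) \<le> (\<Sum>i\<in>UNIV. lam $ i * (column i U \<bullet> v)\<^sup>2)"
    and "(\<Sum>i\<in>UNIV. lam $ i * (column i U \<bullet> v)\<^sup>2) \<le> (\<Sum>i\<in>UNIV. hi * (column i U \<bullet> v)\<^sup>2)"
    using lam by (auto intro!: sum_mono mult_right_mono)
  then show ?thesis
    using quadratic_form weights by (simp add: sum_distrib_left[symmetric])
qed

lemma perturbed_eigenvalue_bounds: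
  fixes U V X :: "real^'n^'n"
  assumes oU: "orthogonal_matrix U" and S: "S = U ** diag_mat lam ** transpose U"
    and oV: "orthogonal_matrix V" and A: "S + t *\<^sub>R X = V ** diag_mat mu ** transpose V"
    and lam: "\<And>i. lam $ i \<in> {lo..hi}" and X: "\<And>v. norm (X *v v) \<le> norm v * c"
  shows "mu $ k \<in> {lo - \<bar>t\<bar> * c .. hi + \<bar>t\<bar> * c}"
proof -
  let ?v = "column k V"
  have unit: "norm ?v = 1"
    by (rule norm_column_orthogonal_matrix[OF oV])
  have "mu $ k = ?v \<bullet> ((S + t *\<^sub>R X) *v ?v)"
    using unit by (simp add: spectral_decomposition_mult_column[OF oV A] norm_eq_1)
  also have "\<dots> = ?v \<bullet> (S *v ?v) + t * (?v \<bullet> (X *v ?v))"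
    by (simp add: matrix_vector_mult_add_rdistrib inner_add_right scaleR_matrix_vector_assoc[symmetric])
  finally have mu: "mu $ k = ?v \<bullet> (S *v ?v) + t * (?v \<bullet> (X *v ?v))" .
  have "\<bar>?v \<bullet> (X *v ?v)\<bar> \<le> c"
    using Cauchy_Schwarz_ineq2[of ?v "X *v ?v"] X[of ?v] unit by simp
  then have "\<bar>t * (?v \<bullet> (X *v ?v))\<bar> \<le> \<bar>t\<bar> * c"
    by (simp add: abs_mult mult_left_mono)
  then show ?thesis
    using mu rayleigh_quotient_bounds[OF oU S lam unit] by auto
qed

lemma eventually_perturbed_spectrum_in_interval:
  fixes U X :: "real^'n^'n"
  assumes oU: "orthogonal_matrix U" and S: "S = U ** diag_mat lam ** transpose U"
    and lam_pos: "\<And>i. 0 < lam $ i"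
  obtains m M where "0 < m" "\<And>i. lam $ i \<in> {m..M}"
    "\<forall>\<^sub>F t in nhds 0. \<forall>V mu. orthogonal_matrix V \<and> S + t *\<^sub>R X = V ** diag_mat mu ** transpose V
        \<longrightarrow> (\<forall>k. mu $ k \<in> {m..M})"
proof -
  define lo where "lo = Min (range (\<lambda>i. lam $ i))"
  define hi where "hi = Max (range (\<lambda>i. lam $ i))"
  have lam: "lam $ i \<in> {lo..hi}" for i
    unfolding lo_def hi_def by (auto intro: Min_le Max_ge)
  have "0 < lo"
    unfolding lo_def using lam_pos Min_in[of "range (\<lambda>i. lam $ i)"] by auto
  obtain c where "0 < c" and X: "\<And>v. norm (X *v v) \<le> norm v * c"
    using bounded_linear.pos_bounded[OF matrix_vector_mul_bounded_linear[of X]] by blast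
  have "\<forall>\<^sub>F t in nhds 0. \<bar>t\<bar> * c < lo / 2"
    unfolding eventually_nhds_metric
    using \<open>0 < lo\<close> \<open>0 < c\<close> by (intro exI[of _ "lo / (2 * c)"]) (auto simp: dist_real_def field_simps)
  then have "\<forall>\<^sub>F t in nhds 0. \<forall>V mu. orthogonal_matrix V \<and> S + t *\<^sub>R X = V ** diag_mat mu ** transpose V
      \<longrightarrow> (\<forall>k. mu $ k \<in> {lo / 2..hi + lo / 2})"
  proof (rule eventually_mono, intro allI impI)
    fix t V mu k
    assume small: "\<bar>t\<bar> * c < lo / 2"
      and "orthogonal_matrix V \<and> S + t *\<^sub>R X = V ** diag_mat mu ** transpose V"
    then have "mu $ k \<in> {lo - \<bar>t\<bar> * c .. hi + \<bar>t\<bar> * c}"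
      using perturbed_eigenvalue_bounds[OF oU S _ _ lam X] by blast
    then show "mu $ k \<in> {lo / 2..hi + lo / 2}"
      using small by auto
  qed
  moreover have "lam $ i \<in> {lo / 2..hi + lo / 2}" for i
    using lam[of i] \<open>0 < lo\<close> by auto
  ultimately show ?thesis
    using that \<open>0 < lo\<close> by (meson half_gt_zero)
qed

lemma perturbed_eigenvector_coeff:
  fixes U V X :: "real^'n^'n"
  assumes oU: "orthogonal_matrix U" and S: "S = U ** diag_mat lam ** transpose U"
    and oV: "orthogonal_matrix V" and A: "S + t *\<^sub>R X = V ** diag_mat mu ** transpose V"
  shows "(mu $ k - lam $ i) * (column k V \<bullet> column i U) = t * (column k V \<bullet> (X *v column i U))"
proof -
  have "mu $ k * (column k V \<bullet> column i U) = ((S + t *\<^sub>R X) *v column k V) \<bullet> column i U"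
    by (simp add: spectral_decomposition_mult_column[OF oV A])
  also have "\<dots> = column k V \<bullet> ((S + t *\<^sub>R X) *v column i U)"
    by (rule sym_mat_self_adjoint) (simp add: A sym_mat_conj_diag_mat)
  also have "\<dots> = lam $ i * (column k V \<bullet> column i U) + t * (column k V \<bullet> (X *v column i U))"
    by (simp add: matrix_vector_mult_add_rdistrib inner_add_right spectral_decomposition_mult_column[OF oU S]
        scaleR_matrix_vector_assoc[symmetric])
  finally show ?thesis by (simp add: algebra_simps)
qed

lemma perturbed_coeff_sum_le_linear:
  fixes U V X :: "real^'n^'n"
  assumes oU: "orthogonal_matrix U" and S: "S = U ** diag_mat lam ** transpose U"
    and oV: "orthogonal_matrix V" and A: "S + t *\<^sub>R X = V ** diag_mat mu ** transpose V"
    and R: "\<And>k. \<bar>mu $ k - lam $ i\<bar> \<le> R"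
  shows "(\<Sum>k\<in>UNIV. (mu $ k - lam $ i)\<^sup>2 * \<bar>column k V \<bullet> column i U\<bar> * \<bar>column k V \<bullet> column j U\<bar>)
    \<le> R * \<bar>t\<bar> * norm (X *v column i U)"
proof -
  have "0 \<le> R"
    using R[of undefined] by linarith
  have "(mu $ k - lam $ i)\<^sup>2 * \<bar>column k V \<bullet> column i U\<bar> * \<bar>column k V \<bullet> column j U\<bar>
      \<le> R * \<bar>t\<bar> * (\<bar>column k V \<bullet> (X *v column i U)\<bar> * \<bar>column k V \<bullet> column j U\<bar>)" for k
  proof -
    have "(mu $ k - lam $ i)\<^sup>2 * \<bar>column k V \<bullet> column i U\<bar> * \<bar>column k V \<bullet> column j U\<bar>
       = \<bar>mu $ k - lam $ i\<bar> * \<bar>(mu $ k - lam $ i) * (column k V \<bullet> column i U)\<bar> * \<bar>column k V \<bullet> column j U\<bar>"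
      by (simp add: abs_mult power2_eq_square)
    also have "\<dots> = \<bar>mu $ k - lam $ i\<bar> * (\<bar>t\<bar> * (\<bar>column k V \<bullet> (X *v column i U)\<bar> * \<bar>column k V \<bullet> column j U\<bar>))"
      unfolding perturbed_eigenvector_coeff[OF oU S oV A] by (simp add: abs_mult mult_ac)
    also have "\<dots> \<le> R * (\<bar>t\<bar> * (\<bar>column k V \<bullet> (X *v column i U)\<bar> * \<bar>column k V \<bullet> column j U\<bar>))"
      by (rule mult_right_mono[OF R]) simp
    finally show ?thesis by (simp add: mult_ac)
  qed
  then have "(\<Sum>k\<in>UNIV. (mu $ k - lam $ i)\<^sup>2 * \<bar>column k V \<bullet> column i U\<bar> * \<bar>column k V \<bullet> column j U\<bar>)
     \<le> R * \<bar>t\<bar> * (\<Sum>k\<in>UNIV. \<bar>column k V \<bullet> (X *v column i U)\<bar> * \<bar>column k V \<bullet> column j U\<bar>)"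
    by (simp add: sum_distrib_left sum_mono)
  also have "\<dots> \<le> R * \<bar>t\<bar> * (norm (X *v column i U) * norm (column j U))"
    using \<open>0 \<le> R\<close> by (intro mult_left_mono orthogonal_matrix_sum_abs_coeff_le[OF oV]) auto
  finally show ?thesis
    by (simp add: norm_column_orthogonal_matrix[OF oU])
qed

lemma perturbed_coeff_sum_le_quadratic:
  fixes U V X :: "real^'n^'n"
  assumes oU: "orthogonal_matrix U" and S: "S = U ** diag_mat lam ** transpose U"
    and oV: "orthogonal_matrix V" and A: "S + t *\<^sub>R X = V ** diag_mat mu ** transpose V"
    and eq: "lam $ i = lam $ j"
  shows "(\<Sum>k\<in>UNIV. (mu $ k - lam $ i)\<^sup>2 * \<bar>column k V \<bullet> column i U\<bar> * \<bar>column k V \<bullet> column j U\<bar>)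
    \<le> t\<^sup>2 * (norm (X *v column i U) * norm (X *v column j U))"
proof -
  have "(mu $ k - lam $ i)\<^sup>2 * \<bar>column k V \<bullet> column i U\<bar> * \<bar>column k V \<bullet> column j U\<bar>
      = t\<^sup>2 * (\<bar>column k V \<bullet> (X *v column i U)\<bar> * \<bar>column k V \<bullet> (X *v column j U)\<bar>)" for k
  proof -
    have "(mu $ k - lam $ i)\<^sup>2 * \<bar>column k V \<bullet> column i U\<bar> * \<bar>column k V \<bullet> column j U\<bar>
      = \<bar>(mu $ k - lam $ i) * (column k V \<bullet> column i U)\<bar> * \<bar>(mu $ k - lam $ j) * (column k V \<bullet> column j U)\<bar>"
      by (simp add: eq abs_mult power2_eq_square mult_ac)
    then show ?thesis
      unfolding perturbed_eigenvector_coeff[OF oU S oV A] by (simp add: abs_mult power2_eq_square mult_ac)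
  qed
  then have "(\<Sum>k\<in>UNIV. (mu $ k - lam $ i)\<^sup>2 * \<bar>column k V \<bullet> column i U\<bar> * \<bar>column k V \<bullet> column j U\<bar>)
     = t\<^sup>2 * (\<Sum>k\<in>UNIV. \<bar>column k V \<bullet> (X *v column i U)\<bar> * \<bar>column k V \<bullet> (X *v column j U)\<bar>)"
    by (simp add: sum_distrib_left)
  also have "\<dots> \<le> t\<^sup>2 * (norm (X *v column i U) * norm (X *v column j U))"
    by (intro mult_left_mono orthogonal_matrix_sum_abs_coeff_le[OF oV]) simp
  finally show ?thesis .
qed

lemma mat_fun_perturbed_entry_taylor:
  fixes U V X :: "real^'n^'n"
  assumes oU: "orthogonal_matrix U" and S: "S = U ** diag_mat lam ** transpose U"
    and oV: "orthogonal_matrix V" and A: "S + t *\<^sub>R X = V ** diag_mat mu ** transpose V"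
    and taylor: "\<And>a y. a \<in> {m..M} \<Longrightarrow> y \<in> {m..M} \<Longrightarrow> \<bar>f y - f a - f' a * (y - a)\<bar> \<le> K * (y - a)\<^sup>2"
    and lam_i: "lam $ i \<in> {m..M}" and mu: "\<And>k. mu $ k \<in> {m..M}"
  shows "\<bar>column i U \<bullet> (mat_fun f (S + t *\<^sub>R X) *v column j U) - f (lam $ i) * (if i = j then 1 else 0)
            - f' (lam $ i) * t * (column i U \<bullet> (X *v column j U))\<bar>
         \<le> K * (\<Sum>k\<in>UNIV. (mu $ k - lam $ i)\<^sup>2 * \<bar>column k V \<bullet> column i U\<bar> * \<bar>column k V \<bullet> column j U\<bar>)"
proof -
  define W where "W k = column k V \<bullet> column i U" for k
  define Z where "Z k = column k V \<bullet> column j U" for k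
  define r where "r k = f (mu $ k) - f (lam $ i) - f' (lam $ i) * (mu $ k - lam $ i)" for k
  have entry: "column i U \<bullet> (mat_fun f (S + t *\<^sub>R X) *v column j U) = (\<Sum>k\<in>UNIV. f (mu $ k) * W k * Z k)"
    using conj_diag_mat_inner[of V "\<chi> k. f (mu $ k)" "column j U" "column i U"]
    by (simp add: mat_fun_spectral[OF oV A] inner_commute W_def Z_def mult_ac)
  have delta: "(if i = j then 1 else 0) = (\<Sum>k\<in>UNIV. W k * Z k)"
    using orthogonal_matrix_parseval[OF oV] by (simp add: W_def Z_def orthogonal_matrix_column_inner[OF oU])
  have "(\<Sum>k\<in>UNIV. mu $ k * W k * Z k) = ((S + t *\<^sub>R X) *v column j U) \<bullet> column i U"
    using conj_diag_mat_inner[of V mu "column j U" "column i U"] by (simp add: A W_def Z_def mult_ac)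
  also have "\<dots> = lam $ j * (column i U \<bullet> column j U) + t * (column i U \<bullet> (X *v column j U))"
    by (simp add: matrix_vector_mult_add_rdistrib inner_add_left spectral_decomposition_mult_column[OF oU S]
        scaleR_matrix_vector_assoc[symmetric] inner_add_right inner_commute)
  also have "\<dots> = lam $ i * (if i = j then 1 else 0) + t * (column i U \<bullet> (X *v column j U))"
    by (simp add: orthogonal_matrix_column_inner[OF oU])
  finally have shift: "t * (column i U \<bullet> (X *v column j U)) = (\<Sum>k\<in>UNIV. (mu $ k - lam $ i) * W k * Z k)"
    using delta by (simp add: algebra_simps sum_subtractf sum_distrib_left)
  have "column i U \<bullet> (mat_fun f (S + t *\<^sub>R X) *v column j U) - f (lam $ i) * (if i = j then 1 else 0)
      - f' (lam $ i) * t * (column i U \<bullet> (X *v column j U))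
    = (\<Sum>k\<in>UNIV. f (mu $ k) * W k * Z k) - f (lam $ i) * (\<Sum>k\<in>UNIV. W k * Z k)
      - f' (lam $ i) * (\<Sum>k\<in>UNIV. (mu $ k - lam $ i) * W k * Z k)"
    unfolding entry delta mult.assoc[of "f' (lam $ i)"] shift ..
  also have "\<dots> = (\<Sum>k\<in>UNIV. f (mu $ k) * W k * Z k - f (lam $ i) * (W k * Z k)
      - f' (lam $ i) * ((mu $ k - lam $ i) * W k * Z k))"
    by (simp add: sum_subtractf sum_distrib_left)
  also have "\<dots> = (\<Sum>k\<in>UNIV. r k * W k * Z k)"
    by (rule sum.cong) (simp_all add: r_def algebra_simps)
  also have "\<bar>\<dots>\<bar> \<le> (\<Sum>k\<in>UNIV. \<bar>r k\<bar> * (\<bar>W k\<bar> * \<bar>Z k\<bar>))"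
    by (rule order_trans[OF sum_abs]) (simp add: abs_mult mult.assoc)
  also have "\<dots> \<le> (\<Sum>k\<in>UNIV. K * (mu $ k - lam $ i)\<^sup>2 * (\<bar>W k\<bar> * \<bar>Z k\<bar>))"
    using taylor[OF lam_i mu] by (intro sum_mono mult_right_mono) (simp_all add: r_def)
  finally show ?thesis
    by (simp add: W_def Z_def sum_distrib_left mult_ac)
qed

lemma mat_fun_perturbed_entry_error_le:
  fixes U V X :: "real^'n^'n" and f f' :: "real \<Rightarrow> real" and i j :: 'n
  assumes oU: "orthogonal_matrix U" and S: "S = U ** diag_mat lam ** transpose U"
    and oV: "orthogonal_matrix V" and A: "S + t *\<^sub>R X = V ** diag_mat mu ** transpose V"
    and taylor: "\<And>a y. a \<in> {m..M} \<Longrightarrow> y \<in> {m..M} \<Longrightarrow> \<bar>f y - f a - f' a * (y - a)\<bar> \<le> K * (y - a)\<^sup>2"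
    and "0 \<le> K" and lam: "\<And>i. lam $ i \<in> {m..M}" and mu: "\<And>k. mu $ k \<in> {m..M}"
  defines "err \<equiv> \<bar>column i U \<bullet> (mat_fun f (S + t *\<^sub>R X) *v column j U)
      - f (lam $ i) * (if i = j then 1 else 0) - f' (lam $ i) * t * (column i U \<bullet> (X *v column j U))\<bar>"
    and "C \<equiv> K * (M - m) * norm (X *v column i U) + K * norm (X *v column i U) * norm (X *v column j U)"
  shows "err \<le> C * \<bar>t\<bar>" and "lam $ i = lam $ j \<Longrightarrow> err \<le> C * t\<^sup>2"
proof -
  let ?sum = "\<Sum>k\<in>UNIV. (mu $ k - lam $ i)\<^sup>2 * \<bar>column k V \<bullet> column i U\<bar> * \<bar>column k V \<bullet> column j U\<bar>"
  have err: "err \<le> K * ?sum"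
    unfolding err_def by (rule mat_fun_perturbed_entry_taylor[OF oU S oV A taylor lam mu])
  have "0 \<le> K * (M - m) * norm (X *v column i U)" and "0 \<le> K * norm (X *v column i U) * norm (X *v column j U)"
    using \<open>0 \<le> K\<close> lam[of i] by auto
  then have C: "K * (M - m) * norm (X *v column i U) \<le> C" "K * norm (X *v column i U) * norm (X *v column j U) \<le> C"
    by (simp_all add: C_def)
  have "\<bar>mu $ k - lam $ i\<bar> \<le> M - m" for k
    using mu[of k] lam[of i] by auto
  then have "K * ?sum \<le> K * ((M - m) * \<bar>t\<bar> * norm (X *v column i U))"
    using perturbed_coeff_sum_le_linear[OF oU S oV A] \<open>0 \<le> K\<close> by (intro mult_left_mono) auto
  also have "\<dots> \<le> C * \<bar>t\<bar>"
    using mult_right_mono[OF C(1), of "\<bar>t\<bar>"] by (simp add: mult_ac)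
  finally show "err \<le> C * \<bar>t\<bar>"
    using err by linarith
  assume "lam $ i = lam $ j"
  then have "K * ?sum \<le> K * (t\<^sup>2 * (norm (X *v column i U) * norm (X *v column j U)))"
    using perturbed_coeff_sum_le_quadratic[OF oU S oV A] \<open>0 \<le> K\<close> by (intro mult_left_mono)
  also have "\<dots> \<le> C * t\<^sup>2"
    using mult_right_mono[OF C(2), of "t\<^sup>2"] by (simp add: mult_ac)
  finally show "err \<le> C * t\<^sup>2"
    using err by linarith
qed

lemma mat_fun_perturbed_entry_error:
  fixes f f' f'' :: "real \<Rightarrow> real" and U S X :: "real^'n^'n"
  assumes f: "\<And>x. 0 < x \<Longrightarrow> (f has_real_derivative f' x) (at x)"
    and f': "\<And>x. 0 < x \<Longrightarrow> (f' has_real_derivative f'' x) (at x)"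
    and f'': "continuous_on {0<..} f''"
    and oU: "orthogonal_matrix U" and S: "S = U ** diag_mat lam ** transpose U"
    and lam_pos: "\<And>i. 0 < lam $ i" and sX: "sym_mat X"
  obtains C where "\<forall>\<^sub>F t in nhds 0.
    \<bar>column i U \<bullet> (mat_fun f (S + t *\<^sub>R X) *v column j U) - f (lam $ i) * (if i = j then 1 else 0)
       - f' (lam $ i) * t * (column i U \<bullet> (X *v column j U))\<bar> \<le> C * \<bar>t\<bar>
    \<and> (lam $ i = lam $ j \<longrightarrow>
      \<bar>column i U \<bullet> (mat_fun f (S + t *\<^sub>R X) *v column j U) - f (lam $ i) * (if i = j then 1 else 0)
       - f' (lam $ i) * t * (column i U \<bullet> (X *v column j U))\<bar> \<le> C * t\<^sup>2)"
proof -
  obtain m M where "0 < m" and lam: "\<And>i. lam $ i \<in> {m..M}"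
    and spectrum: "\<forall>\<^sub>F t in nhds 0. \<forall>V mu. orthogonal_matrix V \<and> S + t *\<^sub>R X = V ** diag_mat mu ** transpose V
        \<longrightarrow> (\<forall>k. mu $ k \<in> {m..M})"
    using eventually_perturbed_spectrum_in_interval[OF oU S lam_pos] by blast
  have "continuous_on {m..M} f''"
    by (rule continuous_on_subset[OF f'']) (use \<open>0 < m\<close> in auto)
  moreover have "(f has_real_derivative f' x) (at x)" "(f' has_real_derivative f'' x) (at x)"
    if "x \<in> {m..M}" for x
    using f f' that \<open>0 < m\<close> by auto
  ultimately obtain K where "0 \<le> K" and taylor:
    "\<And>a y. a \<in> {m..M} \<Longrightarrow> y \<in> {m..M} \<Longrightarrow> \<bar>f y - f a - f' a * (y - a)\<bar> \<le> K * (y - a)\<^sup>2"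
    using taylor_quadratic_remainder_bound by metis
  have "sym_mat S"
    by (simp add: S sym_mat_conj_diag_mat)
  define C where "C = K * (M - m) * norm (X *v column i U) + K * norm (X *v column i U) * norm (X *v column j U)"
  have bound: "\<bar>column i U \<bullet> (mat_fun f (S + t *\<^sub>R X) *v column j U) - f (lam $ i) * (if i = j then 1 else 0)
       - f' (lam $ i) * t * (column i U \<bullet> (X *v column j U))\<bar> \<le> C * \<bar>t\<bar>
    \<and> (lam $ i = lam $ j \<longrightarrow>
      \<bar>column i U \<bullet> (mat_fun f (S + t *\<^sub>R X) *v column j U) - f (lam $ i) * (if i = j then 1 else 0)
       - f' (lam $ i) * t * (column i U \<bullet> (X *v column j U))\<bar> \<le> C * t\<^sup>2)"
    if "\<forall>V mu. orthogonal_matrix V \<and> S + t *\<^sub>R X = V ** diag_mat mu ** transpose V \<longrightarrow> (\<forall>k. mu $ k \<in> {m..M})"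
    for t
  proof -
    obtain V mu where oV: "orthogonal_matrix V" and A: "S + t *\<^sub>R X = V ** diag_mat mu ** transpose V"
      using sym_mat_spectral_decomposition[OF sym_mat_add_scaleR[OF \<open>sym_mat S\<close> sX]] .
    then have "mu $ k \<in> {m..M}" for k
      using that by blast
    then show ?thesis
      using mat_fun_perturbed_entry_error_le[OF oU S oV A taylor \<open>0 \<le> K\<close> lam] unfolding C_def by blast
  qed
  show ?thesis
    by (rule that[OF eventually_mono[OF spectrum bound]])
qed

lemma mat_fun_perturbed_commutator:
  fixes U S X :: "real^'n^'n" and f :: "real \<Rightarrow> real" and t :: real
  assumes oU: "orthogonal_matrix U" and S: "S = U ** diag_mat lam ** transpose U" and sX: "sym_mat X"
  defines "E \<equiv> transpose U ** mat_fun f (S + t *\<^sub>R X) ** U" and "Y \<equiv> transpose U ** X ** U"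
  shows "diag_mat lam ** E - E ** diag_mat lam = t *\<^sub>R (E ** Y - Y ** E)"
proof -
  have sA: "sym_mat (S + t *\<^sub>R X)"
    by (rule sym_mat_add_scaleR[OF _ sX]) (simp add: S sym_mat_conj_diag_mat)
  have "transpose U ** S ** U = (transpose U ** U) ** diag_mat lam ** (transpose U ** U)"
    by (simp add: S matrix_mul_assoc)
  then have "transpose U ** S ** U = diag_mat lam"
    by (simp add: orthogonal_matrix_transpose_mul[OF oU])
  then have A: "transpose U ** (S + t *\<^sub>R X) ** U = diag_mat lam + t *\<^sub>R Y"
    by (simp add: Y_def matrix_add_ldistrib matrix_add_rdistrib matrix_scalar_ac scalar_matrix_assoc)
  have "E ** (diag_mat lam + t *\<^sub>R Y) = (diag_mat lam + t *\<^sub>R Y) ** E"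
    unfolding E_def A[symmetric] orthogonal_matrix_conj_mul[OF oU] mat_fun_mul_commute[OF sA] ..
  then show ?thesis
    by (simp add: matrix_add_ldistrib matrix_add_rdistrib matrix_scalar_ac scalar_matrix_assoc algebra_simps)
qed

section \<open>The Daleckii--Krein formula\<close>

lemma mat_fun_perturbed_entry_isCont:
  fixes f f' f'' :: "real \<Rightarrow> real" and U S X :: "real^'n^'n"
  assumes f: "\<And>x. 0 < x \<Longrightarrow> (f has_real_derivative f' x) (at x)"
    and f': "\<And>x. 0 < x \<Longrightarrow> (f' has_real_derivative f'' x) (at x)"
    and f'': "continuous_on {0<..} f''"
    and oU: "orthogonal_matrix U" and S: "S = U ** diag_mat lam ** transpose U"
    and lam_pos: "\<And>i. 0 < lam $ i" and sX: "sym_mat X"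
  shows "isCont (\<lambda>t. column i U \<bullet> (mat_fun f (S + t *\<^sub>R X) *v column j U)) 0"
proof -
  let ?e = "\<lambda>t. column i U \<bullet> (mat_fun f (S + t *\<^sub>R X) *v column j U)"
  let ?x = "column i U \<bullet> (X *v column j U)"
  obtain C where error: "\<forall>\<^sub>F t in nhds 0.
      \<bar>column i U \<bullet> (mat_fun f (S + t *\<^sub>R X) *v column j U) - f (lam $ i) * (if i = j then 1 else 0)
         - f' (lam $ i) * t * (column i U \<bullet> (X *v column j U))\<bar> \<le> C * \<bar>t\<bar>
      \<and> (lam $ i = lam $ j \<longrightarrow>
        \<bar>column i U \<bullet> (mat_fun f (S + t *\<^sub>R X) *v column j U) - f (lam $ i) * (if i = j then 1 else 0)
         - f' (lam $ i) * t * (column i U \<bullet> (X *v column j U))\<bar> \<le> C * t\<^sup>2)"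
    by (rule mat_fun_perturbed_entry_error[OF f f' f'' oU S lam_pos sX])
  have "\<forall>\<^sub>F t in nhds 0. \<bar>?e t - ?e 0 - f' (lam $ i) * t * ?x\<bar> \<le> C * \<bar>t\<bar>"
    using error by (rule eventually_mono) (simp add: mat_fun_spectral_entry[OF oU S])
  then have "\<forall>\<^sub>F t in nhds 0. \<bar>?e t - ?e 0\<bar> \<le> (C + \<bar>f' (lam $ i) * ?x\<bar>) * \<bar>t - 0\<bar>"
  proof (rule eventually_mono)
    fix t assume "\<bar>?e t - ?e 0 - f' (lam $ i) * t * ?x\<bar> \<le> C * \<bar>t\<bar>"
    moreover have "\<bar>f' (lam $ i) * t * ?x\<bar> = \<bar>f' (lam $ i) * ?x\<bar> * \<bar>t\<bar>"
      by (simp add: abs_mult)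
    ultimately show "\<bar>?e t - ?e 0\<bar> \<le> (C + \<bar>f' (lam $ i) * ?x\<bar>) * \<bar>t - 0\<bar>"
      by (simp add: distrib_right)
  qed
  then show ?thesis
    by (rule isCont_if_linear_error)
qed

lemma mat_fun_perturbed_entry_has_derivative_equal_eigenvalues:
  fixes f f' f'' :: "real \<Rightarrow> real" and U S X :: "real^'n^'n"
  assumes f: "\<And>x. 0 < x \<Longrightarrow> (f has_real_derivative f' x) (at x)"
    and f': "\<And>x. 0 < x \<Longrightarrow> (f' has_real_derivative f'' x) (at x)"
    and f'': "continuous_on {0<..} f''"
    and oU: "orthogonal_matrix U" and S: "S = U ** diag_mat lam ** transpose U"
    and lam_pos: "\<And>i. 0 < lam $ i" and sX: "sym_mat X"
    and eq: "lam $ i = lam $ j"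
  shows "((\<lambda>t. column i U \<bullet> (mat_fun f (S + t *\<^sub>R X) *v column j U)) has_real_derivative
          f' (lam $ i) * (column i U \<bullet> (X *v column j U))) (at 0)"
proof -
  let ?e = "\<lambda>t. column i U \<bullet> (mat_fun f (S + t *\<^sub>R X) *v column j U)"
  let ?x = "column i U \<bullet> (X *v column j U)"
  obtain C where error: "\<forall>\<^sub>F t in nhds 0.
      \<bar>column i U \<bullet> (mat_fun f (S + t *\<^sub>R X) *v column j U) - f (lam $ i) * (if i = j then 1 else 0)
         - f' (lam $ i) * t * (column i U \<bullet> (X *v column j U))\<bar> \<le> C * \<bar>t\<bar>
      \<and> (lam $ i = lam $ j \<longrightarrow>
        \<bar>column i U \<bullet> (mat_fun f (S + t *\<^sub>R X) *v column j U) - f (lam $ i) * (if i = j then 1 else 0)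
         - f' (lam $ i) * t * (column i U \<bullet> (X *v column j U))\<bar> \<le> C * t\<^sup>2)"
    by (rule mat_fun_perturbed_entry_error[OF f f' f'' oU S lam_pos sX])
  have "\<forall>\<^sub>F t in nhds 0. \<bar>?e t - ?e 0 - f' (lam $ i) * ?x * (t - 0)\<bar> \<le> C * (t - 0)\<^sup>2"
    using error by (rule eventually_mono) (simp add: mat_fun_spectral_entry[OF oU S] eq mult_ac)
  then show ?thesis
    by (rule has_real_derivative_if_quadratic_error)
qed

lemma mat_fun_perturbed_entry_has_derivative_distinct_eigenvalues:
  fixes f f' f'' :: "real \<Rightarrow> real" and U S X :: "real^'n^'n"
  assumes f: "\<And>x. 0 < x \<Longrightarrow> (f has_real_derivative f' x) (at x)"
    and f': "\<And>x. 0 < x \<Longrightarrow> (f' has_real_derivative f'' x) (at x)"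
    and f'': "continuous_on {0<..} f''"
    and oU: "orthogonal_matrix U" and S: "S = U ** diag_mat lam ** transpose U"
    and lam_pos: "\<And>i. 0 < lam $ i" and sX: "sym_mat X"
    and neq: "lam $ i \<noteq> lam $ j"
  shows "((\<lambda>t. column i U \<bullet> (mat_fun f (S + t *\<^sub>R X) *v column j U)) has_real_derivative
          (f (lam $ i) - f (lam $ j)) / (lam $ i - lam $ j) * (column i U \<bullet> (X *v column j U))) (at 0)"
proof -
  define e where "e t a b = column a U \<bullet> (mat_fun f (S + t *\<^sub>R X) *v column b U)" for t a b
  define x where "x a b = column a U \<bullet> (X *v column b U)" for a b
  define Q where "Q t = (\<Sum>l\<in>UNIV. e t i l * x l j - x i l * e t l j) / (lam $ i - lam $ j)" for t
  have e0: "e 0 a b = f (lam $ a) * (if a = b then 1 else 0)" for a b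
    by (simp add: e_def mat_fun_spectral_entry[OF oU S])
  have "i \<noteq> j"
    using neq by auto
  have diag_entry: "(diag_mat lam ** E - E ** diag_mat lam) $ i $ j = (lam $ i - lam $ j) * E $ i $ j"
    for E :: "real^'n^'n"
    by (simp add: diag_mat_mul_nth matrix_mul_diag_mat_nth algebra_simps)
  have commutator_entry:
    "(t *\<^sub>R (E ** Y - Y ** E)) $ i $ j = t * (\<Sum>l\<in>UNIV. E $ i $ l * Y $ l $ j - Y $ i $ l * E $ l $ j)"
    for E Y :: "real^'n^'n" and t :: real
    by (simp add: matrix_matrix_mult_def sum_subtractf)
  have "(lam $ i - lam $ j) * e t i j = t * (\<Sum>l\<in>UNIV. e t i l * x l j - x i l * e t l j)" for t
    using arg_cong[where f="\<lambda>M. M $ i $ j", OF mat_fun_perturbed_commutator[OF oU S sX, of f t]]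
    unfolding diag_entry commutator_entry by (simp add: transpose_conj_nth e_def x_def)
  then have "\<forall>\<^sub>F t in at 0. (e t i j - e 0 i j) / (t - 0) = Q t"
    unfolding eventually_at_filter
    by (intro always_eventually) (use neq \<open>i \<noteq> j\<close> in \<open>auto simp: Q_def e0 field_simps\<close>)
  moreover have "(Q \<longlongrightarrow> Q 0) (at 0)"
  proof -
    have "((\<lambda>t. e t a b) \<longlongrightarrow> e 0 a b) (at 0)" for a b
      using mat_fun_perturbed_entry_isCont[OF f f' f'' oU S lam_pos sX, of a b]
      unfolding e_def isCont_def by simp
    then show ?thesis
      unfolding Q_def using neq by (intro tendsto_intros) auto
  qed
  moreover have "(\<Sum>l\<in>UNIV. e 0 i l * x l j - x i l * e 0 l j)
      = (\<Sum>l\<in>UNIV. (if l = i then f (lam $ i) * x i j else 0) - (if l = j then x i j * f (lam $ j) else 0))"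
    by (rule sum.cong) (auto simp: e0)
  then have "Q 0 = (f (lam $ i) - f (lam $ j)) / (lam $ i - lam $ j) * x i j"
    by (simp add: Q_def sum_subtractf algebra_simps)
  ultimately show ?thesis
    unfolding has_field_derivative_iff e_def[symmetric] x_def[symmetric] using tendsto_cong by fastforce
qed

lemma mat_fun_perturbed_entry_has_derivative:
  fixes f f' f'' :: "real \<Rightarrow> real" and U S X :: "real^'n^'n"
  assumes f: "\<And>x. 0 < x \<Longrightarrow> (f has_real_derivative f' x) (at x)"
    and f': "\<And>x. 0 < x \<Longrightarrow> (f' has_real_derivative f'' x) (at x)"
    and f'': "continuous_on {0<..} f''"
    and oU: "orthogonal_matrix U" and S: "S = U ** diag_mat lam ** transpose U"
    and lam_pos: "\<And>i. 0 < lam $ i" and sX: "sym_mat X"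
  shows "((\<lambda>t. column i U \<bullet> (mat_fun f (S + t *\<^sub>R X) *v column j U)) has_real_derivative
          divided_diff f f' (lam $ i) (lam $ j) * (column i U \<bullet> (X *v column j U))) (at 0)"
  using mat_fun_perturbed_entry_has_derivative_equal_eigenvalues[OF f f' f'' oU S lam_pos sX]
    mat_fun_perturbed_entry_has_derivative_distinct_eigenvalues[OF f f' f'' oU S lam_pos sX]
  by (cases "lam $ i = lam $ j") (simp_all add: divided_diff_def)

theorem mat_fun_has_vector_derivative:
  fixes f f' f'' :: "real \<Rightarrow> real" and U S X :: "real^'n^'n"
  assumes f: "\<And>x. 0 < x \<Longrightarrow> (f has_real_derivative f' x) (at x)"
    and f': "\<And>x. 0 < x \<Longrightarrow> (f' has_real_derivative f'' x) (at x)"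
    and f'': "continuous_on {0<..} f''"
    and oU: "orthogonal_matrix U" and S: "S = U ** diag_mat lam ** transpose U"
    and lam_pos: "\<And>i. 0 < lam $ i" and sX: "sym_mat X"
  shows "((\<lambda>t. mat_fun f (S + t *\<^sub>R X)) has_vector_derivative
    U ** (\<chi> i j. divided_diff f f' (lam $ i) (lam $ j) * (transpose U ** X ** U) $ i $ j) ** transpose U) (at 0)"
proof -
  let ?E = "\<lambda>t. transpose U ** mat_fun f (S + t *\<^sub>R X) ** U"
  have "((\<lambda>t. \<chi> i j. ?E t $ i $ j) has_vector_derivative
      (\<chi> i j. divided_diff f f' (lam $ i) (lam $ j) * (transpose U ** X ** U) $ i $ j)) (at 0)"
    using mat_fun_perturbed_entry_has_derivative[OF f f' f'' oU S lam_pos sX]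
    by (intro has_vector_derivative_vec_lambda)
      (simp add: transpose_conj_nth has_real_derivative_iff_has_vector_derivative)
  moreover have "bounded_linear (\<lambda>M. U ** M ** transpose U)"
    unfolding linear_conv_bounded_linear[symmetric]
    by (rule linearI) (simp_all add: matrix_add_ldistrib matrix_add_rdistrib matrix_scalar_ac scalar_matrix_assoc)
  ultimately have "((\<lambda>t. U ** ?E t ** transpose U) has_vector_derivative
      U ** (\<chi> i j. divided_diff f f' (lam $ i) (lam $ j) * (transpose U ** X ** U) $ i $ j) ** transpose U) (at 0)"
    using bounded_linear.has_vector_derivative by fastforce
  then show ?thesis
    by (simp add: orthogonal_matrix_conj_transpose_conj[OF oU])
qed

lemma dphi_spectral:
  fixes U S X :: "real^'n^'n"
  assumes oU: "orthogonal_matrix U" and S: "S = U ** diag_mat lam ** transpose U"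
    and lam_pos: "\<And>i. 0 < lam $ i" and sX: "sym_mat X"
  shows "dphi \<theta> S X = U ** (\<chi> i j. divided_diff (scalar_phi \<theta>) (scalar_phi' \<theta>) (lam $ i) (lam $ j)
      * (transpose U ** X ** U) $ i $ j) ** transpose U"
proof -
  have "phi \<theta> (S + t *\<^sub>R X) = mat_fun (scalar_phi \<theta>) (S + t *\<^sub>R X)" for t
    by (intro phi_eq_mat_fun sym_mat_add_scaleR sX) (simp add: S sym_mat_conj_diag_mat)
  moreover have "((\<lambda>t. mat_fun (scalar_phi \<theta>) (S + t *\<^sub>R X)) has_vector_derivative U **
      (\<chi> i j. divided_diff (scalar_phi \<theta>) (scalar_phi' \<theta>) (lam $ i) (lam $ j) * (transpose U ** X ** U) $ i $ j)
      ** transpose U) (at 0)"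
    by (rule mat_fun_has_vector_derivative[OF scalar_phi_has_real_derivative scalar_phi'_has_real_derivative
        _ oU S lam_pos sX]) (auto intro!: continuous_intros)
  ultimately show ?thesis
    unfolding dphi_def by (simp add: vector_derivative_at)
qed

section \<open>The mixed-power-affine metric\<close>

definition mpa_weight :: "real \<Rightarrow> real \<Rightarrow> real \<Rightarrow> real \<Rightarrow> real" where
  "mpa_weight \<theta>1 \<theta>2 x y = exp (- ((\<theta>1 + \<theta>2) / 2) * ln x) * exp (- ((\<theta>1 + \<theta>2) / 2) * ln y)
     * divided_diff (scalar_phi \<theta>1) (scalar_phi' \<theta>1) x y * divided_diff (scalar_phi \<theta>2) (scalar_phi' \<theta>2) x y"

lemma mpa_weight_pos:
  assumes "0 < x" "0 < y"
  shows "0 < mpa_weight \<theta>1 \<theta>2 x y"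
proof -
  have "0 < divided_diff (scalar_phi \<theta>) (scalar_phi' \<theta>) x y" for \<theta>
    by (rule divided_diff_pos[OF scalar_phi_has_real_derivative scalar_phi'_pos assms])
  then show ?thesis
    by (simp add: mpa_weight_def)
qed

lemma mpa_weight_commute: "mpa_weight \<theta>1 \<theta>2 x y = mpa_weight \<theta>2 \<theta>1 x y"
  by (simp add: mpa_weight_def add.commute mult_ac)

lemma mpa_form_spectral:
  fixes U S X Y :: "real^'n^'n"
  assumes oU: "orthogonal_matrix U" and S: "S = U ** diag_mat lam ** transpose U"
    and lam_pos: "\<And>i. 0 < lam $ i" and sX: "sym_mat X" and sY: "sym_mat Y"
  shows "mpa_form \<theta>1 \<theta>2 S X Y = (\<Sum>i\<in>UNIV. \<Sum>j\<in>UNIV.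
    mpa_weight \<theta>1 \<theta>2 (lam $ i) (lam $ j) * (transpose U ** X ** U) $ i $ j * (transpose U ** Y ** U) $ i $ j)"
proof -
  define p where "p = (\<chi> i. exp (- ((\<theta>1 + \<theta>2) / 2) * ln (lam $ i)))"
  define D where "D \<theta> Z = (\<chi> i j. divided_diff (scalar_phi \<theta>) (scalar_phi' \<theta>) (lam $ i) (lam $ j)
      * (transpose U ** Z ** U) $ i $ j)" for \<theta> Z
  have "mat_pow (- ((\<theta>1 + \<theta>2) / 2)) S ** dphi \<theta>1 S X ** mat_pow (- ((\<theta>1 + \<theta>2) / 2)) S ** dphi \<theta>2 S Y
     = U ** (diag_mat p ** D \<theta>1 X ** diag_mat p ** D \<theta>2 Y) ** transpose U"
    unfolding mat_pow_spectral[OF oU S] dphi_spectral[OF oU S lam_pos sX] dphi_spectral[OF oU S lam_pos sY]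
      p_def[symmetric] D_def[symmetric]
    by (simp add: matrix_mul_assoc) (simp add: matrix_mul_assoc[symmetric] orthogonal_matrix_transpose_mul[OF oU])
  then have "mpa_form \<theta>1 \<theta>2 S X Y = trace (diag_mat p ** D \<theta>1 X ** diag_mat p ** D \<theta>2 Y)"
    by (simp add: mpa_form_def Let_def trace_orthogonal_conj[OF oU])
  also have "\<dots> = (\<Sum>i\<in>UNIV. \<Sum>j\<in>UNIV. p $ i * D \<theta>1 X $ i $ j * p $ j * D \<theta>2 Y $ j $ i)"
    by (rule trace_diag_mat_mul)
  also have "\<dots> = (\<Sum>i\<in>UNIV. \<Sum>j\<in>UNIV.
    mpa_weight \<theta>1 \<theta>2 (lam $ i) (lam $ j) * (transpose U ** X ** U) $ i $ j * (transpose U ** Y ** U) $ i $ j)"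
  proof (intro sum.cong refl)
    fix i j
    have "D \<theta>2 Y $ j $ i = divided_diff (scalar_phi \<theta>2) (scalar_phi' \<theta>2) (lam $ i) (lam $ j)
        * (transpose U ** Y ** U) $ i $ j"
      by (simp add: D_def divided_diff_commute[of _ _ "lam $ j"] sym_mat_transpose_conj_nth[OF sY])
    then show "p $ i * D \<theta>1 X $ i $ j * p $ j * D \<theta>2 Y $ j $ i = mpa_weight \<theta>1 \<theta>2 (lam $ i) (lam $ j)
        * (transpose U ** X ** U) $ i $ j * (transpose U ** Y ** U) $ i $ j"
      by (simp add: D_def p_def mpa_weight_def mult_ac)
  qed
  finally show ?thesis .
qed

lemma sum_weighted_squares_pos:
  fixes c x :: "'a::finite \<Rightarrow> 'b::finite \<Rightarrow> real"
  assumes c: "\<And>i j. 0 < c i j" and nz: "x i0 j0 \<noteq> 0"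
  shows "0 < (\<Sum>i\<in>UNIV. \<Sum>j\<in>UNIV. c i j * x i j * x i j)"
proof -
  have nonneg: "0 \<le> c i j * x i j * x i j" for i j
    using c[of i j] by (simp add: mult.assoc)
  have "0 < c i0 j0 * x i0 j0 * x i0 j0"
    using c[of i0 j0] nz by (auto simp: mult.assoc zero_less_mult_iff linorder_neq_iff)
  then have "0 < (\<Sum>j\<in>UNIV. c i0 j * x i0 j * x i0 j)"
    using nonneg by (intro sum_pos2[of UNIV j0]) auto
  then show ?thesis
    using nonneg by (intro sum_pos2[of UNIV i0] sum_nonneg) auto
qed

theorem theorem5:
  fixes \<theta>1 \<theta>2 :: real and S :: "real^'n^'n"
  assumes "spd S"
  shows "(\<forall>X Y Z (a::real). sym_mat X \<and> sym_mat Y \<and> sym_mat Z \<longrightarrow>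
            mpa_form \<theta>1 \<theta>2 S (X + a *\<^sub>R Z) Y
              = mpa_form \<theta>1 \<theta>2 S X Y + a * mpa_form \<theta>1 \<theta>2 S Z Y)
       \<and> (\<forall>X Y. sym_mat X \<and> sym_mat Y \<longrightarrow> mpa_form \<theta>1 \<theta>2 S X Y = mpa_form \<theta>1 \<theta>2 S Y X)
       \<and> (\<forall>X. sym_mat X \<and> X \<noteq> 0 \<longrightarrow> mpa_form \<theta>1 \<theta>2 S X X > 0)
       \<and> (\<forall>X Y. sym_mat X \<and> sym_mat Y \<longrightarrow> mpa_form \<theta>1 \<theta>2 S X Y = mpa_form \<theta>2 \<theta>1 S X Y)"
proof -
  obtain U lam where oU: "orthogonal_matrix U" and S: "S = U ** diag_mat lam ** transpose U"
    and lam_pos: "\<And>i. 0 < lam $ i"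
    using spd_spectral_decomposition[OF assms] by blast
  note form = mpa_form_spectral[OF oU S lam_pos]
  have linear: "mpa_form \<theta>1 \<theta>2 S (X + a *\<^sub>R Z) Y = mpa_form \<theta>1 \<theta>2 S X Y + a * mpa_form \<theta>1 \<theta>2 S Z Y"
    if "sym_mat X" "sym_mat Y" "sym_mat Z" for X Y Z :: "real^'n^'n" and a :: real
    using that by (simp add: form sym_mat_add_scaleR transpose_conj_add_scaleR algebra_simps
        sum.distrib sum_distrib_left)
  have positive: "0 < mpa_form \<theta>1 \<theta>2 S X X" if "sym_mat X" "X \<noteq> 0" for X :: "real^'n^'n"
  proof -
    have "transpose U ** X ** U \<noteq> 0"
      using that orthogonal_matrix_transpose_conj_eq_0_iff[OF oU] by blast
    then obtain i j where "(transpose U ** X ** U) $ i $ j \<noteq> 0"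
      by (metis vec_eq_iff zero_index)
    then show ?thesis
      using that by (simp add: form sum_weighted_squares_pos mpa_weight_pos lam_pos)
  qed
  show ?thesis
    using linear positive by (auto simp: form mult_ac mpa_weight_commute)
qed

end
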